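(* Assume $n_1,n_2\in(0,4)$ and (IE). Then for all $\varepsilon\in(0,1)$ and all $t\in(0,T_{max,\varepsilon})$, $$\frac{d}{dt}\int_\Omega u_\varepsilon\le\Big(\lambda_1+\frac{\sqrt\varepsilon}{2\sqrt3}\Big)\int_\Omega u_\varepsilon-\int_\Omega u_\varepsilon^2+a_1\int_\Omega u_\varepsilon v_\varepsilon$$ and $$\frac{d}{dt}\int_\Omega v_\varepsilon\le\Big(\lambda_2+\frac{\sqrt\varepsilon}{2\sqrt3}\Big)\int_\Omega v_\varepsilon-\int_\Omega v_\varepsilon^2-a_2\int_\Omega u_\varepsilon v_\varepsilon+\frac{a_2\sqrt\varepsilon}{2\sqrt3}\int_\Omega u_\varepsilon.$$
   Context: Let $\Omega\subset\mathbb{R}$ be a bounded open interval, $D_i,a_i,\lambda_i,\chi_i>0$ ($i=1,2$), and fix $\alpha\in(0,\frac12]$. Assumption (IE): $u_0,v_0\in W^{1,2}(\Omega)$ with $u_0>0,v_0>0$ in $\overline\Omega$; for each $\varepsilon\in(0,1)$, $u_{0\varepsilon},v_{0\varepsilon}\in C^5(\overline\Omega)$ with $u_{0\varepsilon x}=u_{0\varepsilon xxx}=v_{0\varepsilon x}=v_{0\varepsilon xxx}=0$ on $\partial\Omega$; $\frac12\inf_\Omega u_0\le u_{0\varepsilon}\le u_0+1$, $\frac12\inf_\Omega v_0\le v_{0\varepsilon}\le v_0+1$ in $\Omega$; $\int_\Omega u_{0\varepsilon x}^2\le\int_\Omega u_{0x}^2+1$, $\int_\Omega v_{0\varepsilon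 x}^2\le\int_\Omega v_{0x}^2+1$; $u_{0\varepsilon}\to u_0$, $v_{0\varepsilon}\to v_0$ a.e. as $\varepsilon\searrow0$. Approximating problem: $u_t=-\varepsilon\big(\frac{u^4}{u^{4-n_1}+\varepsilon}u_{xxx}\big)_x+\varepsilon^{\alpha/2}(u^{-\alpha}u_x)_x+D_1u_{xx}-\chi_1\big(\frac{u^{5-n_1}}{u^{4-n_1}+\varepsilon}v_x\big)_x+\frac{3u^3}{3u^2+\varepsilon}(\lambda_1-u+a_1v)$, $v_t=-\varepsilon\big(\frac{v^4}{v^{4-n_2}+\varepsilon}v_{xxx}\big)_x+\varepsilon^{\alpha/2}(v^{-\alpha}v_x)_x+D_2v_{xx}+\chi_2\big(\frac{v^{5-n_2}}{v^{4-n_2}+\varepsilon}u_x\big)_x+\frac{3v^3}{3v^2+\varepsilon}(\lambda_2-v-a_2u)$ in $\Omega\times(0,\infty)$, $u_x=v_x=u_{xxx}=v_{xxx}=0$ on $\partial\Omega$, $u(\cdot,0)=u_{0\varepsilon}$, $v(\cdot,0)=v_{0\varepsilon}$. For $n_i\in(0,4)$ and each $\varepsilon$ it has a classical solution $(u_\varepsilon,v_\varepsilon)$, positive in $\overline\Omega\times[0,T_{max,\varepsilon})$, belonging to $\bigcap_{s\in(3/2,2)}C^0([0,T_{max,\varepsilon});W^{s,2}(\Omega))\cap C^{4,1}(\overline\Omega\times(0,T_{max,\varepsilon}))$, where $T_{max,\varepsilon}\in(0,\infty]$ is maximal: either $T_{max,\varepsilon}=\infty$ or $\limsup_{t\nearrow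 T_{max,\varepsilon}}\{\|u_\varepsilon(\cdot,t)\|_{W^{2,2}}+\|1/u_\varepsilon(\cdot,t)\|_{L^\infty}+\|v_\varepsilon(\cdot,t)\|_{W^{2,2}}+\|1/v_\varepsilon(\cdot,t)\|_{L^\infty}\}=\infty$. *)

theory Defs
  imports "HOL-Analysis.Analysis"
begin

text \<open>The spatial domain is the open interval a < x < b; functions of space-time are
  written u x t.\<close>
definition pdx :: "real \<Rightarrow> real \<Rightarrow> (real \<Rightarrow> real \<Rightarrow> real) \<Rightarrow> real \<Rightarrow> real \<Rightarrow> real" where
  "pdx a b u x t = (THE D. ((\<lambda>y. u y t) has_real_derivative D) (at x within {a..b}))"

text \<open>Partial time derivative (used only for interior times).\<close>
definition pdt :: "(real \<Rightarrow> real \<Rightarrow> real) \<Rightarrow> real \<Rightarrow> real \<Rightarrow> real" where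
  "pdt u x t = deriv (\<lambda>s. u x s) t"

definition tint :: "ereal \<Rightarrow> real set" where
  "tint T = {t. 0 < t \<and> ereal t < T}"

text \<open>Regularity of a classical solution: continuous on [a,b] x [0,T), and
  C^{4,1}([a,b] x (0,T)) (x-derivatives up to order 4 and the t-derivative exist and are
  continuous on [a,b] x (0,T)).\<close>
definition classical_reg :: "real \<Rightarrow> real \<Rightarrow> ereal \<Rightarrow> (real \<Rightarrow> real \<Rightarrow> real) \<Rightarrow> bool" where
  "classical_reg a b T u \<longleftrightarrow>
     continuous_on ({a..b} \<times> {t. 0 \<le> t \<and> ereal t < T}) (\<lambda>(x,t). u x t) \<and>
     (\<forall>k<4. \<forall>t\<in>tint T. \<forall>x\<in>{a..b}.
        ((\<lambda>y. (pdx a b ^^ k) u y t) has_real_derivative ((pdx a b ^^ Suc k) u x t)) (at x within {a..b})) \<and>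
     (\<forall>k\<le>4. continuous_on ({a..b} \<times> tint T) (\<lambda>(x,t). (pdx a b ^^ k) u x t)) \<and>
     (\<forall>t\<in>tint T. \<forall>x\<in>{a..b}. ((\<lambda>s. u x s) has_real_derivative (pdt u x t)) (at t)) \<and>
     continuous_on ({a..b} \<times> tint T) (\<lambda>(x,t). pdt u x t)"

end

(* Integrating the equation for w (coupled to z) over the interval, every divergence term
   integrates to the difference of its flux at the endpoints, and all fluxes vanish there
   because w_x = w_xxx = z_x = 0. Differentiating under the integral sign, d/dt of the mass
   of w is therefore the integral of the regularised reaction 3w^3/(3w^2 + eps) (lam - w + mu z).
   Now 3w^3/(3w^2 + eps) = w - theta with theta = eps w/(3w^2 + eps), and AM-GM gives
   theta <= sqrt eps/(2 sqrt 3), which bounds the reaction pointwise. For u the coupling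
   a1 v is nonnegative and costs nothing; for v the coupling -a2 u has the wrong sign and
   produces the extra term a2 sqrt eps/(2 sqrt 3) u. *)

theory Submission
  imports Defs
begin

lemma pdx_eqI:
  assumes "a < b" "x \<in> {a..b}" "((\<lambda>y. g y t) has_real_derivative D) (at x within {a..b})"
  shows "pdx a b g x t = D"
  unfolding pdx_def
proof (rule the_equality)
  fix D' assume "((\<lambda>y. g y t) has_real_derivative D') (at x within {a..b})"
  then show "D' = D"
    using vector_derivative_unique_within_closed_interval[of a b x "\<lambda>y. g y t" D' D] assms
    by (simp add: has_real_derivative_iff_has_vector_derivative)
qed (fact assms(3))

lemma has_real_derivative_pdx:
  assumes "a < b" "x \<in> {a..b}" "\<exists>D. ((\<lambda>y. g y t) has_real_derivative D) (at x within {a..b})"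
  shows "((\<lambda>y. g y t) has_real_derivative pdx a b g x t) (at x within {a..b})"
  using assms pdx_eqI by metis

lemma open_tint: "open (tint T)"
proof -
  have "tint T = {0<..} \<inter> {t. ereal t < T}"
    by (auto simp: tint_def)
  then show ?thesis
    by (simp add: open_Int open_Collect_less continuous_on_ereal continuous_on_id)
qed

lemma convex_tint: "convex (tint T)"
  unfolding is_interval_convex_1[symmetric] is_interval_1 tint_def
  by (auto intro: le_less_trans[of "ereal _", rotated])

lemma classical_reg_continuous_on_section:
  assumes "classical_reg a b T w" "0 \<le> t" "ereal t < T"
  shows "continuous_on {a..b} (\<lambda>x. w x t)"
proof -
  have "continuous_on ({a..b} \<times> {t. 0 \<le> t \<and> ereal t < T}) (\<lambda>(x, t). w x t)"
    using assms(1) by (simp add: classical_reg_def)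
  then have "continuous_on {a..b} (\<lambda>x. (\<lambda>(x, t). w x t) (x, t))"
    by (rule continuous_on_compose2) (use assms(2,3) in \<open>auto intro!: continuous_intros\<close>)
  then show ?thesis
    by simp
qed

lemma classical_reg_has_derivative_pdx:
  assumes "classical_reg a b T w" "t \<in> tint T" "x \<in> {a..b}" "k < 4"
  shows "((\<lambda>y. (pdx a b ^^ k) w y t) has_real_derivative (pdx a b ^^ Suc k) w x t) (at x within {a..b})"
  using assms by (simp add: classical_reg_def)

lemma classical_reg_integral_has_derivative:
  assumes reg: "classical_reg a b T w" and t: "t \<in> tint T"
  shows "((\<lambda>s. integral {a..b} (\<lambda>x. w x s)) has_real_derivative integral {a..b} (\<lambda>x. pdt w x t)) (at t)"
proof -
  have dt: "((\<lambda>s. w x s) has_real_derivative pdt w x s) (at s)" if "s \<in> tint T" "x \<in> {a..b}" for s x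
    using reg that by (simp add: classical_reg_def)
  have "continuous_on ({a..b} \<times> tint T) (\<lambda>(x, s). pdt w x s)"
    using reg by (simp add: classical_reg_def)
  then have "continuous_on (tint T \<times> {a..b}) (\<lambda>p. (\<lambda>(x, s). pdt w x s) (snd p, fst p))"
    by (rule continuous_on_compose2) (auto intro!: continuous_intros)
  then have cont: "continuous_on (tint T \<times> {a..b}) (\<lambda>(s, x). pdt w x s)"
    by (simp add: split_beta)
  have "((\<lambda>s. integral (cbox a b) (\<lambda>x. w x s)) has_real_derivative integral (cbox a b) (\<lambda>x. pdt w x t))
      (at t within tint T)"
  proof (rule leibniz_rule_field_derivative[OF _ _ _ t convex_tint])
    show "((\<lambda>s. w x s) has_real_derivative pdt w x s) (at s within tint T)"
      if "s \<in> tint T" "x \<in> cbox a b" for s x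
      using dt[of s x] that by (simp add: has_field_derivative_at_within)
    show "(\<lambda>x. w x s) integrable_on cbox a b" if "s \<in> tint T" for s
      using classical_reg_continuous_on_section[OF reg] that
      by (simp add: tint_def integrable_continuous_interval)
  qed (use cont in simp)
  then show ?thesis
    using at_within_open[OF t open_tint] by simp
qed

lemma integral_has_derivative_zero_flux:
  fixes G G' R :: "real \<Rightarrow> real"
  assumes "a < b" and reg: "classical_reg a b T w" and t: "t \<in> tint T"
    and G: "\<And>x. x \<in> {a..b} \<Longrightarrow> (G has_real_derivative G' x) (at x within {a..b})"
    and "G a = 0" "G b = 0"
    and balance: "\<And>x. x \<in> {a<..<b} \<Longrightarrow> pdt w x t = G' x + R x"
    and "continuous_on {a..b} R"
  shows "((\<lambda>s. integral {a..b} (\<lambda>x. w x s)) has_real_derivative integral {a..b} R) (at t)"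
proof -
  have "(G' has_integral G b - G a) {a..b}"
    using fundamental_theorem_of_calculus[of a b G G'] \<open>a < b\<close> G
    by (simp add: has_real_derivative_iff_has_vector_derivative)
  then have "(G' has_integral 0) {a..b}"
    using \<open>G a = 0\<close> \<open>G b = 0\<close> by simp
  moreover have "(R has_integral integral {a..b} R) {a..b}"
    using \<open>continuous_on {a..b} R\<close> by (simp add: integrable_continuous_interval integrable_integral)
  ultimately have "((\<lambda>x. G' x + R x) has_integral 0 + integral {a..b} R) {a..b}"
    by (rule has_integral_add)
  moreover have "pdt w x t = G' x + R x" if "x \<in> {a..b} - {a, b}" for x
    using balance that by simp
  ultimately have "((\<lambda>x. pdt w x t) has_integral integral {a..b} R) {a..b}"
    using has_integral_spike_finite[of "{a, b}" "{a..b}" "\<lambda>x. pdt w x t" "\<lambda>x. G' x + R x"] by simp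
  then show ?thesis
    using classical_reg_integral_has_derivative[OF reg t] integral_unique by metis
qed

lemma thin_film_fluxes_differentiable:
  fixes f g :: "real \<Rightarrow> real"
  assumes f: "(f has_real_derivative f') (at x within S)" and g: "(g has_real_derivative g') (at x within S)"
    and pos: "f x > 0" and e: "e > 0"
  shows "\<exists>D. ((\<lambda>y. f y ^ 4 / (f y powr p + e) * g y) has_real_derivative D) (at x within S)"
    and "\<exists>D. ((\<lambda>y. f y powr q * g y) has_real_derivative D) (at x within S)"
    and "\<exists>D. ((\<lambda>y. f y powr r / (f y powr p + e) * g y) has_real_derivative D) (at x within S)"
proof -
  have nz: "f x powr p + e \<noteq> 0"
    using e powr_ge_zero[of "f x" p] by linarith
  show "\<exists>D. ((\<lambda>y. f y ^ 4 / (f y powr p + e) * g y) has_real_derivative D) (at x within S)"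
    "\<exists>D. ((\<lambda>y. f y powr q * g y) has_real_derivative D) (at x within S)"
    "\<exists>D. ((\<lambda>y. f y powr r / (f y powr p + e) * g y) has_real_derivative D) (at x within S)"
    by (rule exI, (rule f g pos nz derivative_intros)+)+
qed

lemma thin_film_flux_has_derivative:
  fixes \<kappa> \<delta> d \<gamma> p q r \<epsilon> :: real
  assumes ab: "a < b" and reg: "classical_reg a b T w" "classical_reg a b T z"
    and t: "t \<in> tint T" and x: "x \<in> {a..b}" and "0 < w x t" "0 < \<epsilon>"
  shows "((\<lambda>y. \<kappa> * (w y t ^ 4 / (w y t powr p + \<epsilon>) * (pdx a b ^^ 3) w y t)
               + \<delta> * (w y t powr q * pdx a b w y t) + d * pdx a b w y t
               + \<gamma> * (w y t powr r / (w y t powr p + \<epsilon>) * pdx a b z y t))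
         has_real_derivative
           \<kappa> * pdx a b (\<lambda>y s. w y s ^ 4 / (w y s powr p + \<epsilon>) * (pdx a b ^^ 3) w y s) x t
         + \<delta> * pdx a b (\<lambda>y s. w y s powr q * pdx a b w y s) x t + d * (pdx a b ^^ 2) w x t
         + \<gamma> * pdx a b (\<lambda>y s. w y s powr r / (w y s powr p + \<epsilon>) * pdx a b z y s) x t)
         (at x within {a..b})"
proof -
  have dw: "((\<lambda>y. w y t) has_real_derivative pdx a b w x t) (at x within {a..b})"
    using classical_reg_has_derivative_pdx[OF reg(1) t x, of 0] by simp
  have dwx: "((\<lambda>y. pdx a b w y t) has_real_derivative (pdx a b ^^ 2) w x t) (at x within {a..b})"
    using classical_reg_has_derivative_pdx[OF reg(1) t x, of 1] by (simp add: numeral_2_eq_2)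
  have dwxxx: "((\<lambda>y. (pdx a b ^^ 3) w y t) has_real_derivative (pdx a b ^^ 4) w x t) (at x within {a..b})"
    using classical_reg_has_derivative_pdx[OF reg(1) t x, of 3] by (simp add: numeral_eq_Suc)
  have dzx: "((\<lambda>y. pdx a b z y t) has_real_derivative (pdx a b ^^ 2) z x t) (at x within {a..b})"
    using classical_reg_has_derivative_pdx[OF reg(2) t x, of 1] by (simp add: numeral_2_eq_2)
  note fluxes = thin_film_fluxes_differentiable[OF dw _ \<open>0 < w x t\<close> \<open>0 < \<epsilon>\<close>]
  show ?thesis
    by (intro DERIV_add DERIV_cmult dwx has_real_derivative_pdx[OF ab x]
          fluxes(1)[OF dwxxx] fluxes(2)[OF dwx] fluxes(3)[OF dzx])
qed

lemma regularization_defect_le: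
  fixes w e :: real
  assumes "0 \<le> w" "0 < e"
  shows "e * w / (3 * w\<^sup>2 + e) \<le> sqrt e / (2 * sqrt 3)"
proof -
  define s r where "s = sqrt e" and "r = sqrt (3::real)"
  have s: "0 < s" "e = s\<^sup>2" and r: "0 < r" "3 = r\<^sup>2"
    using assms by (simp_all add: s_def r_def)
  have "0 \<le> s * (r * w - s)\<^sup>2"
    using s by simp
  then have "e * w * (2 * r) \<le> s * (3 * w\<^sup>2 + e)"
    unfolding s(2) r(2) by (simp add: power2_eq_square algebra_simps)
  moreover have "0 < 3 * w\<^sup>2 + e"
    using assms by (simp add: add_nonneg_pos)
  ultimately show ?thesis
    using r(1) by (simp add: s_def r_def field_simps)
qed

lemma regularized_logistic_le:
  fixes w e l m k :: real
  assumes "0 < w" "0 < e" "0 \<le> k" "0 \<le> l + m + k"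
  shows "3 * w ^ 3 / (3 * w\<^sup>2 + e) * (l - w + m)
    \<le> (l + sqrt e / (2 * sqrt 3)) * w - w\<^sup>2 + m * w + sqrt e / (2 * sqrt 3) * k"
proof -
  define \<theta> where "\<theta> = e * w / (3 * w\<^sup>2 + e)"
  have "0 < 3 * w\<^sup>2 + e"
    using assms by (simp add: add_pos_pos)
  then have "3 * w ^ 3 / (3 * w\<^sup>2 + e) = w - \<theta>"
    by (simp add: \<theta>_def field_simps power2_eq_square power3_eq_cube)
  then have "3 * w ^ 3 / (3 * w\<^sup>2 + e) * (l - w + m) = w * (l - w + m) - \<theta> * (l + m) + \<theta> * w"
    by (simp only:) (simp add: algebra_simps)
  moreover have \<theta>: "0 \<le> \<theta>" "\<theta> \<le> sqrt e / (2 * sqrt 3)"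
    using assms regularization_defect_le[of w e] by (simp_all add: \<theta>_def)
  moreover have "- \<theta> * (l + m) \<le> \<theta> * k"
    using mult_nonneg_nonneg[OF \<open>0 \<le> \<theta>\<close> assms(4)] by (simp add: algebra_simps)
  moreover have "\<theta> * w \<le> sqrt e / (2 * sqrt 3) * w" "\<theta> * k \<le> sqrt e / (2 * sqrt 3) * k"
    using mult_right_mono[OF \<theta>(2)] assms(1,3) by simp_all
  ultimately show ?thesis
    by (simp add: power2_eq_square algebra_simps)
qed

lemma thin_film_logistic_mass_le:
  fixes \<kappa> \<delta> d \<gamma> p q r \<epsilon> l \<mu> :: real
  defines "c \<equiv> sqrt \<epsilon> / (2 * sqrt 3)"
  assumes ab: "a < b" and reg: "classical_reg a b T w" "classical_reg a b T z" and t: "t \<in> tint T"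
    and pos: "\<And>x. x \<in> {a..b} \<Longrightarrow> 0 < w x t \<and> 0 \<le> z x t" and "0 < \<epsilon>" "0 \<le> l"
    and eq: "\<And>x. x \<in> {a<..<b} \<Longrightarrow>
      pdt w x t =
          \<kappa> * pdx a b (\<lambda>y s. w y s ^ 4 / (w y s powr p + \<epsilon>) * (pdx a b ^^ 3) w y s) x t
        + \<delta> * pdx a b (\<lambda>y s. w y s powr q * pdx a b w y s) x t
        + d * (pdx a b ^^ 2) w x t
        + \<gamma> * pdx a b (\<lambda>y s. w y s powr r / (w y s powr p + \<epsilon>) * pdx a b z y s) x t
        + 3 * w x t ^ 3 / (3 * (w x t)\<^sup>2 + \<epsilon>) * (l - w x t + \<mu> * z x t)"
    and bc: "\<And>x. x \<in> {a, b} \<Longrightarrow> pdx a b w x t = 0 \<and> (pdx a b ^^ 3) w x t = 0 \<and> pdx a b z x t = 0"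
  shows "\<exists>D. ((\<lambda>s. integral {a..b} (\<lambda>x. w x s)) has_real_derivative D) (at t) \<and>
           D \<le> (l + c) * integral {a..b} (\<lambda>x. w x t) - integral {a..b} (\<lambda>x. (w x t)\<^sup>2)
                + \<mu> * integral {a..b} (\<lambda>x. w x t * z x t) + c * max 0 (- \<mu>) * integral {a..b} (\<lambda>x. z x t)"
proof -
  define R where "R x = 3 * w x t ^ 3 / (3 * (w x t)\<^sup>2 + \<epsilon>) * (l - w x t + \<mu> * z x t)" for x
  have cw: "continuous_on {a..b} (\<lambda>x. w x t)" and cz: "continuous_on {a..b} (\<lambda>x. z x t)"
    using t classical_reg_continuous_on_section[OF reg(1)] classical_reg_continuous_on_section[OF reg(2)]
    by (simp_all add: tint_def)
  have "0 < 3 * (w x t)\<^sup>2 + \<epsilon>" for x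
    using \<open>0 < \<epsilon>\<close> by (simp add: add_nonneg_pos)
  then have cR: "continuous_on {a..b} R"
    unfolding R_def by (intro continuous_intros cw cz) (metis less_irrefl)
  have "((\<lambda>s. integral {a..b} (\<lambda>x. w x s)) has_real_derivative integral {a..b} R) (at t)"
    by (rule integral_has_derivative_zero_flux[OF ab reg(1) t
          thin_film_flux_has_derivative[OF ab reg t _ _ \<open>0 < \<epsilon>\<close>]])
       (use pos eq bc cR in \<open>simp_all add: R_def\<close>)
  moreover have "integral {a..b} R \<le> (l + c) * integral {a..b} (\<lambda>x. w x t) - integral {a..b} (\<lambda>x. (w x t)\<^sup>2)
                + \<mu> * integral {a..b} (\<lambda>x. w x t * z x t) + c * max 0 (- \<mu>) * integral {a..b} (\<lambda>x. z x t)"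
  proof (rule has_integral_le)
    show "(R has_integral integral {a..b} R) {a..b}"
      using cR by (simp add: integrable_continuous_interval integrable_integral)
    show "((\<lambda>x. (l + c) * w x t - (w x t)\<^sup>2 + \<mu> * (w x t * z x t) + c * max 0 (- \<mu>) * z x t) has_integral
      (l + c) * integral {a..b} (\<lambda>x. w x t) - integral {a..b} (\<lambda>x. (w x t)\<^sup>2)
       + \<mu> * integral {a..b} (\<lambda>x. w x t * z x t) + c * max 0 (- \<mu>) * integral {a..b} (\<lambda>x. z x t)) {a..b}"
      by (intro has_integral_add has_integral_diff has_integral_mult_right integrable_integral
            integrable_continuous_interval continuous_intros cw cz)
    show "R x \<le> (l + c) * w x t - (w x t)\<^sup>2 + \<mu> * (w x t * z x t) + c * max 0 (- \<mu>) * z x t"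
      if "x \<in> {a..b}" for x
    proof -
      have "0 \<le> l + \<mu> * z x t + max 0 (- \<mu>) * z x t"
        using \<open>0 \<le> l\<close> pos[OF that] by (cases "0 \<le> \<mu>") (simp_all add: max_def)
      then show ?thesis
        using regularized_logistic_le[of "w x t" \<epsilon> "max 0 (- \<mu>) * z x t" l "\<mu> * z x t"] pos[OF that] \<open>0 < \<epsilon>\<close>
        by (simp add: R_def c_def algebra_simps)
    qed
  qed
  ultimately show ?thesis
    by blast
qed

theorem lemma2p2:
  fixes a b D1 D2 a1 a2 lam1 lam2 \<chi>1 \<chi>2 \<alpha> n1 n2 \<epsilon> :: real
    and T :: ereal
    and u v :: "real \<Rightarrow> real \<Rightarrow> real"
  assumes ab: "a < b"
    and pars: "D1 > 0" "D2 > 0" "a1 > 0" "a2 > 0" "lam1 > 0" "lam2 > 0" "\<chi>1 > 0" "\<chi>2 > 0"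
    and alpha: "0 < \<alpha>" "\<alpha> \<le> 1/2"
    and n: "0 < n1" "n1 < 4" "0 < n2" "n2 < 4"
    and eps: "0 < \<epsilon>" "\<epsilon> < 1"
    and T: "T > 0"
    and reg: "classical_reg a b T u" "classical_reg a b T v"
    and pos: "\<And>x t. x \<in> {a..b} \<Longrightarrow> 0 \<le> t \<Longrightarrow> ereal t < T \<Longrightarrow> u x t > 0 \<and> v x t > 0"
    and eq_u: "\<And>x t. x \<in> {a<..<b} \<Longrightarrow> t \<in> tint T \<Longrightarrow>
      pdt u x t =
        - \<epsilon> * pdx a b (\<lambda>y s. (u y s)^4 / (u y s powr (4 - n1) + \<epsilon>) * (pdx a b ^^ 3) u y s) x t
        + \<epsilon> powr (\<alpha>/2) * pdx a b (\<lambda>y s. u y s powr (-\<alpha>) * pdx a b u y s) x t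
        + D1 * (pdx a b ^^ 2) u x t
        - \<chi>1 * pdx a b (\<lambda>y s. u y s powr (5 - n1) / (u y s powr (4 - n1) + \<epsilon>) * pdx a b v y s) x t
        + 3 * (u x t)^3 / (3 * (u x t)^2 + \<epsilon>) * (lam1 - u x t + a1 * v x t)"
    and eq_v: "\<And>x t. x \<in> {a<..<b} \<Longrightarrow> t \<in> tint T \<Longrightarrow>
      pdt v x t =
        - \<epsilon> * pdx a b (\<lambda>y s. (v y s)^4 / (v y s powr (4 - n2) + \<epsilon>) * (pdx a b ^^ 3) v y s) x t
        + \<epsilon> powr (\<alpha>/2) * pdx a b (\<lambda>y s. v y s powr (-\<alpha>) * pdx a b v y s) x t
        + D2 * (pdx a b ^^ 2) v x t
        + \<chi>2 * pdx a b (\<lambda>y s. v y s powr (5 - n2) / (v y s powr (4 - n2) + \<epsilon>) * pdx a b u y s) x t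
        + 3 * (v x t)^3 / (3 * (v x t)^2 + \<epsilon>) * (lam2 - v x t - a2 * u x t)"
    and bc: "\<And>x t. x \<in> {a, b} \<Longrightarrow> t \<in> tint T \<Longrightarrow>
      pdx a b u x t = 0 \<and> (pdx a b ^^ 3) u x t = 0 \<and> pdx a b v x t = 0 \<and> (pdx a b ^^ 3) v x t = 0"
    and t: "t \<in> tint T"
  shows "(\<exists>Du. ((\<lambda>s. integral {a..b} (\<lambda>x. u x s)) has_real_derivative Du) (at t) \<and>
           Du \<le> (lam1 + sqrt \<epsilon> / (2 * sqrt 3)) * integral {a..b} (\<lambda>x. u x t)
                 - integral {a..b} (\<lambda>x. (u x t)^2) + a1 * integral {a..b} (\<lambda>x. u x t * v x t)) \<and>
         (\<exists>Dv. ((\<lambda>s. integral {a..b} (\<lambda>x. v x s)) has_real_derivative Dv) (at t) \<and>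
           Dv \<le> (lam2 + sqrt \<epsilon> / (2 * sqrt 3)) * integral {a..b} (\<lambda>x. v x t)
                 - integral {a..b} (\<lambda>x. (v x t)^2) - a2 * integral {a..b} (\<lambda>x. u x t * v x t)
                 + a2 * sqrt \<epsilon> / (2 * sqrt 3) * integral {a..b} (\<lambda>x. u x t))"
proof -
  have pos_t: "\<And>x. x \<in> {a..b} \<Longrightarrow> 0 < u x t \<and> 0 < v x t"
    using pos t by (simp add: tint_def)
  have "\<exists>Du. ((\<lambda>s. integral {a..b} (\<lambda>x. u x s)) has_real_derivative Du) (at t) \<and>
      Du \<le> (lam1 + sqrt \<epsilon> / (2 * sqrt 3)) * integral {a..b} (\<lambda>x. u x t) - integral {a..b} (\<lambda>x. (u x t)\<^sup>2)
        + a1 * integral {a..b} (\<lambda>x. u x t * v x t)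
        + sqrt \<epsilon> / (2 * sqrt 3) * max 0 (- a1) * integral {a..b} (\<lambda>x. v x t)"
    by (rule thin_film_logistic_mass_le[where \<kappa> = "- \<epsilon>" and \<delta> = "\<epsilon> powr (\<alpha>/2)"
          and d = D1 and \<gamma> = "- \<chi>1" and p = "4 - n1" and q = "- \<alpha>" and r = "5 - n1", OF ab reg(1,2) t])
       (use pos_t eps pars eq_u[OF _ t] bc[OF _ t] in \<open>auto simp: less_imp_le\<close>)
  moreover have "\<exists>Dv. ((\<lambda>s. integral {a..b} (\<lambda>x. v x s)) has_real_derivative Dv) (at t) \<and>
      Dv \<le> (lam2 + sqrt \<epsilon> / (2 * sqrt 3)) * integral {a..b} (\<lambda>x. v x t) - integral {a..b} (\<lambda>x. (v x t)\<^sup>2)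
        + (- a2) * integral {a..b} (\<lambda>x. v x t * u x t)
        + sqrt \<epsilon> / (2 * sqrt 3) * max 0 (- (- a2)) * integral {a..b} (\<lambda>x. u x t)"
    by (rule thin_film_logistic_mass_le[where \<kappa> = "- \<epsilon>" and \<delta> = "\<epsilon> powr (\<alpha>/2)"
          and d = D2 and \<gamma> = \<chi>2 and p = "4 - n2" and q = "- \<alpha>" and r = "5 - n2", OF ab reg(2,1) t])
       (use pos_t eps pars eq_v[OF _ t] bc[OF _ t] in \<open>auto simp: less_imp_le\<close>)
  ultimately show ?thesis
    using pars by (simp add: mult.commute[of "v _ t"] algebra_simps)
qed

end
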